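(* Let $m\ge 1$ and $p,q\in\{1,\dots,2n-1\}$ satisfy $m+(p-n)_+\ge 1+(q-n)_+$, where $x_+=\max(x,0)$. Write $s_1<s_2<\cdots<s_{2n}$ for the elements of $\mathcal{I}$ in increasing order (so $s_j=j$ for $j\le n$ and $s_j=\overline{2n-j+1}$ for $n<j\le 2n$). Suppose $M_1\in M_p(m)$ is one of the following monomials (empty products being $1$): (1) $M_1=X_{s_2}(p+m-1)X_{s_3}(p+m-2)\cdots X_{s_p}(m+1)\,X_{\bar 1}(m)$; (2) $M_1=X_{s_2}(p+m-1)X_{s_3}(p+m-2)\cdots X_{s_{p+1}}(m)$; (3) $M_1=X_{s_1}(p+m-1)X_{s_2}(p+m-2)\cdots X_{s_{p-1}}(m+1)\,X_{\bar 1}(m)$. Then for every $M_2\in M_q(1)$, the monomial $M_1\cdot M_2$ is not a highest weight vector of $\mathcal{M}$.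
   Context: Fix $n\ge 2$ and type $C_n$ with $I=\{1,\dots,n\}$. Let $\mathcal{M}$ be the set of Laurent monomials $M=\prod_{i\in I,k\in\mathbb{Z}}Y_i(k)^{y_i(k)}$ ($y_i(k)\in\mathbb{Z}$, finitely many nonzero); put $Y_0(k)=Y_{n+1}(k)=1$. For $i\in I$ put $\varepsilon_i(M)=\max_k(-\sum_{j>k}y_i(j))$; $M$ is a highest weight vector if $\varepsilon_i(M)=0$ for all $i\in I$ (equivalently all Kashiwara operators $\tilde e_i$ of Nakajima's monomial crystal kill $M$). The $X$-variables are $X_i(k)=Y_i(k)Y_{i-1}(k+1)^{-1}$ and $X_{\bar i}(k)=Y_{i-1}(k+n-i+1)Y_i(k+n-i+1)^{-1}$ for $1\le i\le n$, $k\in\mathbb{Z}$. The alphabet $\mathcal{I}=\{1,\dots,n,\bar n,\dots,\bar 1\}$ is ordered $1<\cdots<n<\bar n<\cdots<\bar 1$. For $1\le k\le 2n$, $m\in\mathbb{Z}$: $M_k(m)=\{X_{i_1}(k+m-1)X_{i_2}(k+m-2)\cdots X_{i_k}(m): i_j\in\mathcal{I},\ i_1<\cdots<i_k\}$. *)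

theory Defs
  imports Main
begin

text \<open>Type C_n, I = {1..n}. A Laurent monomial M = prod Y_i(k)^{y_i(k)} is represented
by its exponent function y :: nat => int => int (y i k = exponent of Y_i(k)),
with finite support inside {1..n} x Z. Y_0(k) = Y_{n+1}(k) = 1 is built into Yv.\<close>

type_synonym monomial = "nat \<Rightarrow> int \<Rightarrow> int"

definition monomials :: "nat \<Rightarrow> monomial set" where
  "monomials n = {y. finite {(i,k). y i k \<noteq> 0} \<and> (\<forall>i k. y i k \<noteq> 0 \<longrightarrow> i \<in> {1..n})}"

definition mmult :: "monomial \<Rightarrow> monomial \<Rightarrow> monomial" where
  "mmult M N = (\<lambda>i k. M i k + N i k)"

definition monone :: monomial where
  "monone = (\<lambda>i k. 0)"

definition Yv :: "nat \<Rightarrow> nat \<Rightarrow> int \<Rightarrow> monomial" where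
  "Yv n i k = (\<lambda>j l. if j = i \<and> l = k \<and> 1 \<le> i \<and> i \<le> n then 1 else 0)"

definition minv :: "monomial \<Rightarrow> monomial" where
  "minv M = (\<lambda>i k. - M i k)"

definition tailsum :: "monomial \<Rightarrow> nat \<Rightarrow> int \<Rightarrow> int" where
  "tailsum M i k = (\<Sum>j\<in>{j. k < j \<and> M i j \<noteq> 0}. M i j)"

definition eps :: "monomial \<Rightarrow> nat \<Rightarrow> int" where
  "eps M i = Sup (range (\<lambda>k. - tailsum M i k))"

definition highest_weight :: "nat \<Rightarrow> monomial \<Rightarrow> bool" where
  "highest_weight n M \<longleftrightarrow> M \<in> monomials n \<and> (\<forall>i\<in>{1..n}. eps M i = 0)"

definition Xv :: "nat \<Rightarrow> nat \<Rightarrow> int \<Rightarrow> monomial" where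
  "Xv n i k = mmult (Yv n i k) (minv (Yv n (i - 1) (k + 1)))"

definition Xbar :: "nat \<Rightarrow> nat \<Rightarrow> int \<Rightarrow> monomial" where
  "Xbar n i k = mmult (Yv n (i - 1) (k + int n - int i + 1)) (minv (Yv n i (k + int n - int i + 1)))"

text \<open>Letters of the alphabet 1 < ... < n < nbar < ... < 1bar are encoded by their
  position j in {1..2n}: s_j = j for j <= n, s_j = bar(2n-j+1) for n < j <= 2n.\<close>
definition Xs :: "nat \<Rightarrow> nat \<Rightarrow> int \<Rightarrow> monomial" where
  "Xs n j k = (if j \<le> n then Xv n j k else Xbar n (2*n - j + 1) k)"

definition Xword :: "nat \<Rightarrow> int \<Rightarrow> nat list \<Rightarrow> monomial" where
  "Xword n m js = foldr mmult
     (map (\<lambda>t. Xs n (js ! t) (int (length js) + m - 1 - int t)) [0..<length js]) monone"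

definition Mset :: "nat \<Rightarrow> nat \<Rightarrow> int \<Rightarrow> monomial set" where
  "Mset n k m = {Xword n m js | js. length js = k \<and> sorted_wrt (<) js \<and> set js \<subseteq> {1..2*n}}"

end

theory Submission
  imports Defs
begin

text \<open>If \<open>M1 M2\<close> were highest weight, all its tail sums sum_{j>k} y_i(j) would be
  nonnegative, hence so would the additive functionals sum_i sum_{j > K - s i} y_i(j).
  For s = 0, 1 a variable X_a(t) contributes -1, 0 or 1 to such a functional, and 1 only for
  the letter a = 1, which can only stand at the front of a word. With s = 0 and K = m + n - 1,
  \<open>M1\<close> contributes at most -1 and \<open>M2\<close> at most 0, unless \<open>M1\<close> is of type (2) with p < n.
  In that case K = p + m - 1 forces \<open>M2\<close> to start with X_1 and to have a barred letter at
  time K; this letter makes the functional with s = 1 at K + n negative, the hypothesis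
  m + (p - n)_+ >= 1 + (q - n)_+ keeping the leading X_1 of \<open>M2\<close> from compensating.\<close>

lemma monomials_finite_row:
  assumes "M \<in> monomials n"
  shows "finite {k. M i k \<noteq> 0}"
proof -
  have "{k. M i k \<noteq> 0} \<subseteq> snd ` {(i, k). M i k \<noteq> 0}" by force
  then show ?thesis using assms unfolding monomials_def by (auto intro: finite_subset)
qed

lemma mmult_in_monomials:
  assumes "M \<in> monomials n" "N \<in> monomials n"
  shows "mmult M N \<in> monomials n"
proof -
  have "{(i, k). mmult M N i k \<noteq> 0} \<subseteq> {(i, k). M i k \<noteq> 0} \<union> {(i, k). N i k \<noteq> 0}"
    by (auto simp: mmult_def)
  with assms show ?thesis
    unfolding monomials_def
    by (auto intro: finite_subset simp: mmult_def) (metis add.right_neutral)+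
qed

lemma minv_in_monomials: "M \<in> monomials n \<Longrightarrow> minv M \<in> monomials n"
  unfolding monomials_def minv_def by simp

lemma monone_in_monomials: "monone \<in> monomials n"
  unfolding monomials_def monone_def by simp

lemma Yv_in_monomials: "Yv n a b \<in> monomials n"
proof -
  have "{(i, k). Yv n a b i k \<noteq> 0} \<subseteq> {(a, b)}" by (auto simp: Yv_def)
  then show ?thesis unfolding monomials_def by (auto intro: finite_subset simp: Yv_def)
qed

lemma Xs_in_monomials: "Xs n j t \<in> monomials n"
  unfolding Xs_def Xv_def Xbar_def
  by (simp add: mmult_in_monomials minv_in_monomials Yv_in_monomials)

lemma foldr_mmult_in_monomials:
  "set Ms \<subseteq> monomials n \<Longrightarrow> foldr mmult Ms monone \<in> monomials n"
  by (induction Ms) (auto simp: monone_in_monomials mmult_in_monomials)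

lemma Xword_in_monomials: "Xword n m js \<in> monomials n"
  unfolding Xword_def by (rule foldr_mmult_in_monomials) (auto simp: Xs_in_monomials)

lemma tailsum_mmult:
  assumes "finite {j. M i j \<noteq> 0}" "finite {j. N i j \<noteq> 0}"
  shows "tailsum (mmult M N) i k = tailsum M i k + tailsum N i k"
proof -
  let ?S = "{j. k < j \<and> (M i j \<noteq> 0 \<or> N i j \<noteq> 0)}"
  have "finite ?S"
    by (rule finite_subset[of _ "{j. M i j \<noteq> 0} \<union> {j. N i j \<noteq> 0}"]) (use assms in auto)
  then have "tailsum M i k = (\<Sum>j\<in>?S. M i j)" "tailsum N i k = (\<Sum>j\<in>?S. N i j)"
    "tailsum (mmult M N) i k = (\<Sum>j\<in>?S. mmult M N i j)"
    unfolding tailsum_def by (auto intro!: sum.mono_neutral_left simp: mmult_def)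
  then show ?thesis by (simp add: mmult_def sum.distrib)
qed

lemma tailsum_minv: "tailsum (minv M) i k = - tailsum M i k"
  unfolding tailsum_def minv_def by (simp add: sum_negf)

lemma tailsum_monone: "tailsum monone i k = 0"
  unfolding tailsum_def monone_def by simp

lemma tailsum_Yv: "tailsum (Yv n a b) i k = (if i = a \<and> 1 \<le> a \<and> a \<le> n \<and> k < b then 1 else 0)"
proof -
  have "{j. k < j \<and> Yv n a b i j \<noteq> 0} = (if i = a \<and> 1 \<le> a \<and> a \<le> n \<and> k < b then {b} else {})"
    by (auto simp: Yv_def)
  then show ?thesis unfolding tailsum_def by (simp add: Yv_def)
qed

text \<open>Only finitely many tail sums occur in a row, so the supremum defining \<open>eps\<close> bounds them all.\<close>
lemma tailsum_nonneg_if_eps_zero: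
  assumes "finite {j. M i j \<noteq> 0}" "eps M i = 0"
  shows "0 \<le> tailsum M i k"
proof -
  let ?S = "{j. M i j \<noteq> 0}"
  have "range (\<lambda>k. - tailsum M i k) \<subseteq> (\<lambda>T. - sum (M i) T) ` Pow ?S"
    unfolding tailsum_def by blast
  then have "bdd_above (range (\<lambda>k. - tailsum M i k))"
    using assms(1) by (meson finite_Pow_iff finite_imageI finite_subset bdd_above_finite)
  then have "- tailsum M i k \<le> eps M i"
    unfolding eps_def by (rule cSup_upper[rotated]) simp
  with assms(2) show ?thesis by simp
qed

definition shifted_tail :: "nat \<Rightarrow> int \<Rightarrow> monomial \<Rightarrow> int \<Rightarrow> int" where
  "shifted_tail n s M K = (\<Sum>i=1..n. tailsum M i (K - s * int i))"

lemma shifted_tail_mmult: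
  assumes "M \<in> monomials n" "N \<in> monomials n"
  shows "shifted_tail n s (mmult M N) K = shifted_tail n s M K + shifted_tail n s N K"
  unfolding shifted_tail_def
  by (simp add: tailsum_mmult monomials_finite_row[OF assms(1)] monomials_finite_row[OF assms(2)]
      sum.distrib)

lemma shifted_tail_minv: "shifted_tail n s (minv M) K = - shifted_tail n s M K"
  unfolding shifted_tail_def by (simp add: tailsum_minv sum_negf)

lemma shifted_tail_Yv:
  "shifted_tail n s (Yv n a b) K = (if 1 \<le> a \<and> a \<le> n \<and> K - s * int a < b then 1 else 0)"
proof -
  have "shifted_tail n s (Yv n a b) K
      = (\<Sum>i=1..n. if a = i then (if 1 \<le> a \<and> a \<le> n \<and> K - s * int a < b then 1 else 0) else 0)"
    unfolding shifted_tail_def tailsum_Yv by (rule sum.cong) auto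
  then show ?thesis by simp
qed

lemma shifted_tail_foldr_mmult:
  "set Ms \<subseteq> monomials n \<Longrightarrow>
    shifted_tail n s (foldr mmult Ms monone) K = (\<Sum>M\<leftarrow>Ms. shifted_tail n s M K)"
proof (induction Ms)
  case Nil
  then show ?case by (simp add: shifted_tail_def tailsum_monone)
next
  case (Cons M Ms)
  then show ?case by (simp add: shifted_tail_mmult foldr_mmult_in_monomials)
qed

lemma shifted_tail_Xword:
  "shifted_tail n s (Xword n m js) K
     = (\<Sum>t<length js. shifted_tail n s (Xs n (js ! t) (int (length js) + m - 1 - int t)) K)"
  unfolding Xword_def
  by (subst shifted_tail_foldr_mmult)
    (auto simp: Xs_in_monomials interv_sum_list_conv_sum_set_nat atLeast0LessThan)

lemma highest_weight_shifted_tail_nonneg: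
  assumes "highest_weight n M"
  shows "0 \<le> shifted_tail n s M K"
  using assms tailsum_nonneg_if_eps_zero monomials_finite_row
  unfolding highest_weight_def shifted_tail_def by (auto intro!: sum_nonneg)

lemma shifted_tail_Xv:
  assumes "1 \<le> j" "j \<le> n"
  shows "shifted_tail n s (Xv n j t) K
    = (if K - s * int j < t then 1 else 0) - (if 2 \<le> j \<and> K - s * (int j - 1) < t + 1 then 1 else 0)"
  using assms
  by (auto simp: Xv_def shifted_tail_mmult Yv_in_monomials minv_in_monomials shifted_tail_minv
      shifted_tail_Yv of_nat_diff)

lemma shifted_tail_Xbar:
  assumes "1 \<le> i" "i \<le> n"
  shows "shifted_tail n s (Xbar n i t) K
    = (if 2 \<le> i \<and> K - s * (int i - 1) < t + int n - int i + 1 then 1 else 0)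
      - (if K - s * int i < t + int n - int i + 1 then 1 else 0)"
  using assms
  by (auto simp: Xbar_def shifted_tail_mmult Yv_in_monomials minv_in_monomials shifted_tail_minv
      shifted_tail_Yv of_nat_diff)

lemma shifted_tail_Xs_barred_eq:
  assumes "n < j" "j \<le> 2 * n"
  shows "shifted_tail n s (Xs n j t) K
    = (if j < 2 * n \<and> K - s * (2 * int n - int j) < t + int j - int n then 1 else 0)
      - (if K - s * (2 * int n - int j + 1) < t + int j - int n then 1 else 0)"
proof -
  define i where "i = 2 * n - j + 1"
  have i: "1 \<le> i" "i \<le> n" "int i = 2 * int n - int j + 1" "2 \<le> i \<longleftrightarrow> j < 2 * n"
    using assms by (auto simp: i_def)
  have "Xs n j t = Xbar n i t" using assms(1) by (simp add: Xs_def i_def)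
  then show ?thesis using assms by (simp add: shifted_tail_Xbar[OF i(1,2)] i(3,4) algebra_simps)
qed

lemma shifted_tail_Xs_le:
  assumes "s \<in> {0, 1}" "1 \<le> j" "j \<le> 2 * n"
  shows "shifted_tail n s (Xs n j t) K \<le> (if j = 1 \<and> K < t + s then 1 else 0)"
proof (cases "j \<le> n")
  case True
  then show ?thesis using assms by (auto simp: Xs_def shifted_tail_Xv)
next
  case False
  then show ?thesis using assms by (auto simp: shifted_tail_Xs_barred_eq)
qed

lemma shifted_tail_Xs_unbarred: "2 \<le> j \<Longrightarrow> j \<le> n \<Longrightarrow> shifted_tail n 0 (Xs n j t) t = -1"
  by (simp add: Xs_def shifted_tail_Xv)

lemma shifted_tail_Xs_bar1: "1 \<le> n \<Longrightarrow> K < t + int n \<Longrightarrow> shifted_tail n 0 (Xs n (2 * n) t) K = -1"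
  by (simp add: shifted_tail_Xs_barred_eq)

lemma shifted_tail_Xs_barred:
  "n < j \<Longrightarrow> j \<le> 2 * n \<Longrightarrow> shifted_tail n 1 (Xs n j t) (t + int n) = -1"
  by (simp add: shifted_tail_Xs_barred_eq)

lemma sorted_wrt_less_nth_diff:
  fixes xs :: "nat list"
  assumes "sorted_wrt (<) xs" "i \<le> j" "j < length xs"
  shows "xs ! i + (j - i) \<le> xs ! j"
  using assms(2,3)
proof (induction j rule: dec_induct)
  case base
  then show ?case by simp
next
  case (step k)
  then have "xs ! k < xs ! Suc k" using assms(1) by (simp add: sorted_wrt_nth_less)
  then show ?case using step by simp
qed

text \<open>Position \<open>t\<close> of a word contributes at most \<open>0\<close> unless it carries the letter \<open>1\<close>, which
  forces \<open>t = 0\<close>; \<open>R\<close> collects positions known to contribute \<open>-1\<close>.\<close>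
lemma shifted_tail_Xword_le:
  assumes "s \<in> {0, 1}" "sorted_wrt (<) js" "set js \<subseteq> {1..2 * n}" "R \<subseteq> {..<length js}"
    and "\<And>r. r \<in> R \<Longrightarrow> shifted_tail n s (Xs n (js ! r) (int (length js) + m - 1 - int r)) K = -1"
  shows "shifted_tail n s (Xword n m js) K
    \<le> (if js \<noteq> [] \<and> js ! 0 = 1 \<and> K < int (length js) + m - 1 + s then 1 else 0) - int (card R)"
proof -
  let ?w = "\<lambda>t. shifted_tail n s (Xs n (js ! t) (int (length js) + m - 1 - int t)) K"
  let ?c = "if js ! 0 = 1 \<and> K < int (length js) + m - 1 + s then 1 else 0 :: int"
  have "?w t \<le> (if t = 0 then ?c else 0) - (if t \<in> R then 1 else 0)" if "t < length js" for t
  proof -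
    have "js ! 0 \<in> set js" "js ! t \<in> set js" using that by (auto intro: nth_mem)
    then have letters: "js ! 0 \<in> {1..2 * n}" "js ! t \<in> {1..2 * n}" using assms(3) by auto
    have first: "t = 0" if "js ! t = 1"
    proof (rule ccontr)
      assume "t \<noteq> 0"
      then have "js ! 0 < js ! t" using assms(2) \<open>t < length js\<close> by (simp add: sorted_wrt_nth_less)
      then show False using that letters(1) by simp
    qed
    show ?thesis
    proof (cases "t \<in> R")
      case True
      then show ?thesis using assms(5) by simp
    next
      case False
      have "?w t \<le> (if js ! t = 1 \<and> K < int (length js) + m - 1 - int t + s then 1 else 0)"
        using shifted_tail_Xs_le[OF assms(1)] letters(2) by simp
      then show ?thesis using False first by (cases "js ! t = 1") auto
    qed
  qed
  then have "sum ?w {..<length js}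
      \<le> (\<Sum>t<length js. (if t = 0 then ?c else 0) - (if t \<in> R then 1 else 0))"
    by (intro sum_mono) simp
  also have "\<dots>
      = (if js \<noteq> [] \<and> js ! 0 = 1 \<and> K < int (length js) + m - 1 + s then 1 else 0) - int (card R)"
    using assms(4) by (simp add: sum_subtractf sum.If_cases Int_absorb1)
  finally show ?thesis unfolding shifted_tail_Xword .
qed

lemma shifted_tail_Xword_type1:
  assumes "2 \<le> n" "1 \<le> p" "p < 2 * n"
  shows "shifted_tail n 0 (Xword n m ([2..<p+1] @ [2 * n])) (m + int n - 1) \<le> -1"
proof -
  let ?js = "[2..<p+1] @ [2 * n]"
  have "?js ! (p - 1) = 2 * n" "?js ! 0 \<noteq> 1" using assms by (auto simp: nth_append)
  then have "shifted_tail n 0 (Xword n m ?js) (m + int n - 1) \<le> 0 - int (card {p - 1})"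
    using assms
    by (intro order.trans[OF shifted_tail_Xword_le[where R = "{p - 1}"]])
      (auto simp: sorted_wrt_append of_nat_diff intro!: shifted_tail_Xs_bar1)
  then show ?thesis by simp
qed

lemma shifted_tail_Xword_type3:
  assumes "2 \<le> n" "1 \<le> p" "p < 2 * n"
  shows "shifted_tail n 0 (Xword n m ([1..<p] @ [2 * n])) (m + int n - 1) \<le> -1"
proof -
  let ?js = "[1..<p] @ [2 * n]"
  let ?K = "m + int n - 1"
  have sorted: "sorted_wrt (<) ?js" and letters: "set ?js \<subseteq> {1..2 * n}"
    using assms by (auto simp: sorted_wrt_append)
  have last:
    "shifted_tail n 0 (Xs n (?js ! (p - 1)) (int (length ?js) + m - 1 - int (p - 1))) ?K = -1"
    using assms by (auto simp: nth_append of_nat_diff intro!: shifted_tail_Xs_bar1)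
  show ?thesis
  proof (cases "n < p")
    case True
    have letter: "?js ! (p - n) = p - n + 1" and first: "?js ! 0 = 1"
      using True assms by (auto simp: nth_append)
    have time: "int (length ?js) + m - 1 - int (p - n) = ?K" using True by simp
    have "shifted_tail n 0 (Xs n (p - n + 1) ?K) ?K = -1"
      using True assms by (intro shifted_tail_Xs_unbarred) auto
    then have
      "shifted_tail n 0 (Xs n (?js ! (p - n)) (int (length ?js) + m - 1 - int (p - n))) ?K = -1"
      unfolding letter time .
    then have "shifted_tail n 0 (Xword n m ?js) ?K \<le> 1 - int (card {p - n, p - 1})"
      using assms last first True
      by (intro order.trans[OF shifted_tail_Xword_le[OF _ sorted letters, where R = "{p - n, p - 1}"]])
        auto
    then show ?thesis using True assms by simp
  next
    case False
    then have "shifted_tail n 0 (Xword n m ?js) ?K \<le> 0 - int (card {p - 1})"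
      using assms last
      by (intro order.trans[OF shifted_tail_Xword_le[OF _ sorted letters, where R = "{p - 1}"]])
        auto
    then show ?thesis by simp
  qed
qed

lemma shifted_tail_Xword_type2_ge:
  assumes "2 \<le> n" "n \<le> p" "p < 2 * n"
  shows "shifted_tail n 0 (Xword n m [2..<p+2]) (m + int n - 1) \<le> -1"
proof -
  let ?K = "m + int n - 1"
  obtain r where r: "r < p" "shifted_tail n 0 (Xs n (r + 2) (int p + m - 1 - int r)) ?K = -1"
  proof (cases "p = 2 * n - 1")
    case True
    have letter: "p - 1 + 2 = 2 * n" and time: "int p + m - 1 - int (p - 1) = m"
      using True assms by auto
    have "shifted_tail n 0 (Xs n (p - 1 + 2) (int p + m - 1 - int (p - 1))) ?K = -1"
      unfolding letter time using assms by (intro shifted_tail_Xs_bar1) auto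
    then show thesis using assms by (intro that[of "p - 1"]) auto
  next
    case False
    have letter: "p - n + 2 \<le> n" and time: "int p + m - 1 - int (p - n) = ?K"
      using False assms by auto
    have "shifted_tail n 0 (Xs n (p - n + 2) (int p + m - 1 - int (p - n))) ?K = -1"
      unfolding time using letter by (intro shifted_tail_Xs_unbarred) auto
    then show thesis using assms by (intro that[of "p - n"]) auto
  qed
  then have "shifted_tail n 0 (Xword n m [2..<p+2]) ?K \<le> 0 - int (card {r})"
    using assms
    by (intro order.trans[OF shifted_tail_Xword_le[where R = "{r}"]]) (auto simp del: upt_Suc)
  then show ?thesis by simp
qed

lemma shifted_tail_Xword_type2_lt:
  assumes "2 \<le> n" "1 \<le> p" "p < n"
  shows "shifted_tail n 0 (Xword n m [2..<p+2]) (int p + m - 1) \<le> -1"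
proof -
  have "shifted_tail n 0 (Xs n 2 (int p + m - 1)) (int p + m - 1) = -1"
    using assms by (intro shifted_tail_Xs_unbarred) auto
  then have "shifted_tail n 0 (Xword n m [2..<p+2]) (int p + m - 1) \<le> 0 - int (card {0::nat})"
    using assms
    by (intro order.trans[OF shifted_tail_Xword_le[where R = "{0}"]]) (auto simp del: upt_Suc)
  then show ?thesis by simp
qed

lemma shifted_tail_Xword_type2_slanted:
  assumes "p < 2 * n"
  shows "shifted_tail n 1 (Xword n m [2..<p+2]) K \<le> 0"
  using assms
  by (intro order.trans[OF shifted_tail_Xword_le[where R = "{}"]]) (auto simp del: upt_Suc)

lemma shifted_tail_Xword_base1_pos:
  assumes "sorted_wrt (<) js" "set js \<subseteq> {1..2 * n}" "1 \<le> K"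
    and "0 < shifted_tail n 0 (Xword n 1 js) K"
  obtains r where "0 < r" "r < length js" "int (length js) - int r = K" "n < js ! r"
proof -
  have "shifted_tail n 0 (Xword n 1 js) K
      \<le> (if js \<noteq> [] \<and> js ! 0 = 1 \<and> K < int (length js) then 1 else 0) - int (card {})"
    using shifted_tail_Xword_le[OF _ assms(1,2), where R = "{}" and s = 0 and m = 1 and K = K]
    by simp
  then have js: "js \<noteq> []" "js ! 0 = 1" "K < int (length js)"
    using assms(4) by (auto split: if_splits)
  define r where "r = nat (int (length js) - K)"
  have r: "0 < r" "r < length js" "int (length js) - int r = K"
    using js(3) assms(3) by (auto simp: r_def)
  have "n < js ! r"
  proof (rule ccontr)
    assume "\<not> n < js ! r"
    moreover have "js ! 0 < js ! r" using assms(1) r by (simp add: sorted_wrt_nth_less)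
    ultimately have "shifted_tail n 0 (Xs n (js ! r) K) K = -1"
      using js(2) by (intro shifted_tail_Xs_unbarred) auto
    then have "shifted_tail n 0 (Xword n 1 js) K \<le> 1 - int (card {r})"
      using r
      by (intro order.trans[OF shifted_tail_Xword_le[OF _ assms(1,2), where R = "{r}"]]) auto
    with assms(4) show False by simp
  qed
  with r that show thesis by blast
qed

lemma shifted_tail_Xword_base1_nonpos:
  assumes "1 \<le> n" "1 \<le> m" "sorted_wrt (<) js" "set js \<subseteq> {1..2 * n}"
  shows "shifted_tail n 0 (Xword n 1 js) (m + int n - 1) \<le> 0"
proof (rule ccontr)
  let ?K = "m + int n - 1"
  assume "\<not> ?thesis"
  then have "0 < shifted_tail n 0 (Xword n 1 js) ?K" by simp
  moreover have "1 \<le> ?K" using assms(1,2) by simp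
  ultimately obtain r where r: "0 < r" "r < length js" "int (length js) - int r = ?K" "n < js ! r"
    using shifted_tail_Xword_base1_pos[OF assms(3,4)] by blast
  define l where "l = length js - 1"
  have l: "r \<le> l" "l < length js" "int (length js) - int l = 1" using r(1,2) by (auto simp: l_def)
  have "js ! r + (l - r) \<le> js ! l" using l(1,2) by (rule sorted_wrt_less_nth_diff[OF assms(3)])
  moreover have "js ! l \<in> set js" using l(2) by (rule nth_mem)
  then have "js ! l \<le> 2 * n" using assms(4) by auto
  moreover have "int (l - r) = m + int n - 2" using r(3) l by linarith
  ultimately have "m = 1" "js ! l = 2 * n" using r(4) assms(2) by linarith+
  then have "shifted_tail n 0 (Xs n (js ! l) (int (length js) + 1 - 1 - int l)) ?K = -1"
    using l(3) assms(1) by (simp add: shifted_tail_Xs_bar1)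
  then have "shifted_tail n 0 (Xword n 1 js) ?K \<le> 1 - int (card {l})"
    using l(1,2) r(1)
    by (intro order.trans[OF shifted_tail_Xword_le[OF _ assms(3,4), where R = "{l}"]]) auto
  with \<open>\<not> ?thesis\<close> show False by simp
qed

lemma shifted_tail_Xword_base1_slanted:
  assumes "sorted_wrt (<) js" "set js \<subseteq> {1..2 * n}" "r < length js" "n < js ! r"
    and "int (length js) < K" "int (length js) - int r + int n = K"
  shows "shifted_tail n 1 (Xword n 1 js) K \<le> -1"
proof -
  have "js ! r \<in> set js" using assms(3) by simp
  then have "shifted_tail n 1 (Xs n (js ! r) (int (length js) - int r)) K = -1"
    using assms(2,4,6) shifted_tail_Xs_barred by force
  then have "shifted_tail n 1 (Xword n 1 js) K \<le> 0 - int (card {r})"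
    using assms(3,5)
    by (intro order.trans[OF shifted_tail_Xword_le[OF _ assms(1,2), where R = "{r}"]]) auto
  then show ?thesis by simp
qed

theorem lemma5p8:
  fixes n p q :: nat and m :: int and M1 :: monomial
  assumes "n \<ge> 2"
    and "m \<ge> 1"
    and "p \<in> {1..2*n-1}" and "q \<in> {1..2*n-1}"
    and "m + max (int p - int n) 0 \<ge> 1 + max (int q - int n) 0"
    and "M1 \<in> Mset n p m"
    and "M1 = Xword n m ([2..<p+1] @ [2*n])
       \<or> M1 = Xword n m [2..<p+2]
       \<or> M1 = Xword n m ([1..<p] @ [2*n])"
  shows "\<forall>M2 \<in> Mset n q 1. \<not> highest_weight n (mmult M1 M2)"
proof (intro ballI notI)
  fix M2 assume "M2 \<in> Mset n q 1" and hw: "highest_weight n (mmult M1 M2)"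
  then obtain js where M2: "M2 = Xword n 1 js" and len: "length js = q"
    and sorted: "sorted_wrt (<) js" and letters: "set js \<subseteq> {1..2 * n}"
    unfolding Mset_def by blast
  have "M1 \<in> monomials n" using assms(7) Xword_in_monomials by blast
  then have nonneg: "0 \<le> shifted_tail n s M1 K + shifted_tail n s M2 K" for s K
    using highest_weight_shifted_tail_nonneg[OF hw]
    by (simp add: shifted_tail_mmult M2 Xword_in_monomials)
  have p: "1 \<le> p" "p < 2 * n" using assms(1,3) by auto
  have "shifted_tail n 0 M2 (m + int n - 1) \<le> 0"
    unfolding M2 using assms(1,2) sorted letters by (intro shifted_tail_Xword_base1_nonpos) auto
  moreover have "shifted_tail n 0 M1 (m + int n - 1) \<le> -1"
    if "\<not> (M1 = Xword n m [2..<p+2] \<and> p < n)"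
    using assms(7) that shifted_tail_Xword_type1[OF assms(1) p]
      shifted_tail_Xword_type3[OF assms(1) p] shifted_tail_Xword_type2_ge[OF assms(1) _ p(2)]
    by force
  ultimately have type2: "M1 = Xword n m [2..<p+2]" and "p < n"
    using nonneg[of 0 "m + int n - 1"] by force+
  define K where "K = int p + m - 1"
  have "0 < shifted_tail n 0 M2 K"
    using nonneg[of 0 K] shifted_tail_Xword_type2_lt[OF assms(1) p(1) \<open>p < n\<close>, of m]
    by (simp add: type2 K_def)
  moreover have "1 \<le> K" using assms(2) p(1) by (simp add: K_def)
  ultimately obtain r where r: "r < length js" "int (length js) - int r = K" "n < js ! r"
    using shifted_tail_Xword_base1_pos[OF sorted letters] unfolding M2 by blast
  have "max (int p - int n) 0 = 0" "int q - int n \<le> max (int q - int n) 0"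
    using \<open>p < n\<close> by auto
  then have "int q \<le> m + int n - 1" using assms(5) by linarith
  then have "shifted_tail n 1 M2 (K + int n) \<le> -1"
    unfolding M2 using r len p(1)
    by (intro shifted_tail_Xword_base1_slanted[OF sorted letters]) (auto simp: K_def)
  moreover have "shifted_tail n 1 M1 (K + int n) \<le> 0"
    unfolding type2 using p(2) by (rule shifted_tail_Xword_type2_slanted)
  ultimately show False using nonneg[of 1 "K + int n"] by simp
qed

end
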